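(* For every integer $k\geq 3$, every extremal square-free word over an alphabet with exactly $k$ letters has length greater than $\left(\frac{5}{4}\right)^{k/4}$.
   Context: A word is a finite sequence of letters. A factor of $W$ is a word $U$ with $W=W_1UW_2$ for some (possibly empty) words $W_1,W_2$. A square is a nonempty word of the form $XX$; a word is square-free if none of its factors is a square. An extension of a word $W$ over an alphabet $\mathbb{A}$ is any word $W_1xW_2$ where $W=W_1W_2$ ($W_1,W_2$ possibly empty) and $x\in\mathbb{A}$. A word $W$ over $\mathbb{A}$ is extremal square-free if $W$ is square-free and every extension of $W$ (over $\mathbb{A}$) contains a square as a factor. *)

theory Defs
  imports Complex_Main
begin

definition is_factor :: "'a list \<Rightarrow> 'a list \<Rightarrow> bool" where
  "is_factor U W \<longleftrightarrow> (\<exists>W1 W2. W = W1 @ U @ W2)"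

definition is_square :: "'a list \<Rightarrow> bool" where
  "is_square U \<longleftrightarrow> (\<exists>X. X \<noteq> [] \<and> U = X @ X)"

definition square_free :: "'a list \<Rightarrow> bool" where
  "square_free W \<longleftrightarrow> \<not> (\<exists>U. is_factor U W \<and> is_square U)"

definition is_extension :: "'a set \<Rightarrow> 'a list \<Rightarrow> 'a list \<Rightarrow> bool" where
  "is_extension A W V \<longleftrightarrow> (\<exists>W1 W2 x. W = W1 @ W2 \<and> x \<in> A \<and> V = W1 @ [x] @ W2)"

definition extremal_square_free :: "'a set \<Rightarrow> 'a list \<Rightarrow> bool" where
  "extremal_square_free A W \<longleftrightarrow>
     set W \<subseteq> A \<and> square_free W \<and>
     (\<forall>V. is_extension A W V \<longrightarrow> (\<exists>U. is_factor U V \<and> is_square U))"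

end

theory Submission
  imports Defs
begin

text \<open>Prepending a letter \<open>x \<in> A\<close> creates a
  square, which must be a prefix of \<open>x W\<close> since \<open>W\<close> itself is square-free; hence
  \<open>W = Y x Y Z\<close> for some \<open>Y\<close>, and \<open>x\<close> sits at position \<open>|Y|\<close> of \<open>W\<close>. These positions are
  distinct for distinct letters, and if \<open>p < q\<close> are two of them then \<open>3p < 2q\<close>:
  otherwise \<open>W\<close> would begin with a square of period \<open>q - p\<close>. So the \<open>k\<close> positions grow
  geometrically with ratio \<open>3/2\<close>, and \<open>|W| \<ge> (3/2)^(k-1)\<close>, which exceeds \<open>(5/4)^(k/4)\<close>.\<close>

lemma not_square_free_if_prefix_period:
  assumes "0 < d" "2 * d \<le> length W" "\<forall>i<d. W ! i = W ! (d + i)"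
  shows "\<not> square_free W"
proof -
  have "take d (drop d W) = take d W"
    by (rule nth_equalityI) (use assms in auto)
  then have "W = [] @ (take d W @ take d W) @ drop (2 * d) W"
    by (metis append_Nil append_assoc append_take_drop_id mult_2 take_add)
  moreover have "take d W \<noteq> []"
    using assms by (cases W) auto
  ultimately show ?thesis
    unfolding square_free_def is_factor_def is_square_def by blast
qed

text \<open>\<open>cons_square_prefix W l\<close> says that \<open>(W ! l) # W\<close> begins with the square of
  \<open>(W ! l) # take l W\<close>.\<close>

definition cons_square_prefix :: "'a list \<Rightarrow> nat \<Rightarrow> bool" where
  "cons_square_prefix W l \<longleftrightarrow> 2 * l + 1 \<le> length W \<and> (\<forall>i<l. W ! i = W ! (l + 1 + i))"

lemma extremal_square_free_cons_square_prefix: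
  assumes "extremal_square_free A W" "x \<in> A"
  shows "\<exists>l. cons_square_prefix W l \<and> W ! l = x"
proof -
  have sf: "square_free W"
    using assms(1) by (simp add: extremal_square_free_def)
  have "is_extension A W (x # W)"
    unfolding is_extension_def using assms(2) by force
  then obtain U where "is_factor U (x # W)" "is_square U"
    using assms(1) unfolding extremal_square_free_def by blast
  then obtain W1 W2 X where X: "X \<noteq> []" "x # W = W1 @ (X @ X) @ W2"
    unfolding is_factor_def is_square_def by blast
  have "W1 = []"
  proof (rule ccontr)
    assume "W1 \<noteq> []"
    then have "W = tl W1 @ (X @ X) @ W2"
      using X(2) by (cases W1) auto
    then have "is_factor (X @ X) W"
      unfolding is_factor_def by blast
    moreover have "is_square (X @ X)"
      using X(1) by (auto simp: is_square_def)
    ultimately show False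
      using sf by (auto simp: square_free_def)
  qed
  then obtain Y where "W = Y @ x # Y @ W2"
    using X by (cases X) auto
  then show ?thesis
    by (intro exI[of _ "length Y"]) (auto simp: cons_square_prefix_def nth_append)
qed

lemma cons_square_prefix_growth:
  assumes "square_free W" "cons_square_prefix W p" "cons_square_prefix W q" "p < q"
  shows "3 * p < 2 * q"
proof (rule ccontr)
  assume "\<not> 3 * p < 2 * q"
  define d where "d = q - p"
  have d: "0 < d" "2 * d \<le> p"
    using \<open>p < q\<close> \<open>\<not> 3 * p < 2 * q\<close> by (auto simp: d_def)
  have "W ! i = W ! (d + i)" if "i < d" for i
  proof -
    have "W ! (d + i) = W ! (p + 1 + (d + i))"
      using assms(2) d that by (simp add: cons_square_prefix_def)
    also have "p + 1 + (d + i) = q + 1 + i"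
      using \<open>p < q\<close> by (simp add: d_def)
    also have "W ! (q + 1 + i) = W ! i"
      using assms(3) that by (simp add: cons_square_prefix_def d_def)
    finally show ?thesis by simp
  qed
  moreover have "2 * d \<le> length W"
    using assms(2) d by (simp add: cons_square_prefix_def)
  ultimately show False
    using not_square_free_if_prefix_period[OF \<open>0 < d\<close>] assms(1) by blast
qed

lemma Max_ge_power_if_sparse:
  fixes S :: "nat set"
  assumes "finite S" "S \<noteq> {}" "\<forall>p\<in>S. \<forall>q\<in>S. p < q \<longrightarrow> 3 * p < 2 * q"
  shows "(3 / 2 :: real) ^ (card S - 1) \<le> real (Max S) + 1"
  using assms
proof (induction S rule: finite_linorder_max_induct)
  case empty
  then show ?case by simp
next
  case (insert b S)
  show ?case
  proof (cases "S = {}")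
    case True
    then show ?thesis by simp
  next
    case False
    have IH: "(3 / 2 :: real) ^ (card S - 1) \<le> real (Max S) + 1"
      using insert.IH insert.prems(2) False by blast
    have "Max S < b"
      using insert.hyps False by simp
    have "3 * Max S < 2 * b"
      using insert.hyps insert.prems(2) False by simp
    then have step: "3 * real (Max S) + 1 \<le> 2 * real b"
      by linarith
    have "b \<notin> S"
      using insert.hyps by blast
    then have "card (insert b S) - 1 = Suc (card S - 1)"
      using insert.hyps False by (simp add: card_gt_0_iff)
    then have "(3 / 2 :: real) ^ (card (insert b S) - 1) = 3 / 2 * (3 / 2) ^ (card S - 1)"
      by simp
    also have "\<dots> \<le> 3 / 2 * (real (Max S) + 1)"
      using IH by simp
    also have "\<dots> \<le> real b + 1"
      using step by simp
    finally show ?thesis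
      using insert.hyps False \<open>Max S < b\<close> by simp
  qed
qed

lemma five_quarters_powr_less_three_halves_power:
  assumes "k \<ge> 2"
  shows "(5 / 4) powr (real k / 4) < (3 / 2 :: real) ^ (k - 1)"
proof -
  have "(5 / 4) powr (real k / 4) \<le> (5 / 4) powr real (k - 1)"
    using assms by (intro powr_mono) auto
  also have "\<dots> = (5 / 4) ^ (k - 1)"
    by (simp add: powr_realpow)
  also have "\<dots> < (3 / 2) ^ (k - 1)"
    using assms by (intro power_strict_mono) auto
  finally show ?thesis .
qed

theorem mainTheorem2:
  fixes A :: "'a set" and k :: nat and W :: "'a list"
  assumes "k \<ge> 3" and "finite A" and "card A = k"
    and "extremal_square_free A W"
  shows "real (length W) > (5 / 4) powr (real k / 4)"
proof -
  have "\<forall>x\<in>A. \<exists>l. cons_square_prefix W l \<and> W ! l = x"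
    using extremal_square_free_cons_square_prefix[OF assms(4)] by blast
  then obtain g where g: "\<forall>x\<in>A. cons_square_prefix W (g x) \<and> W ! g x = x"
    by (rule bchoice[THEN exE])
  have "inj_on g A"
    using g by (metis inj_onI)
  then have card: "card (g ` A) = k"
    using assms(3) by (simp add: card_image)
  then have nonempty: "g ` A \<noteq> {}"
    using assms(1) by auto
  have "square_free W"
    using assms(4) by (simp add: extremal_square_free_def)
  then have "\<forall>p\<in>g ` A. \<forall>q\<in>g ` A. p < q \<longrightarrow> 3 * p < 2 * q"
    using g by (auto intro: cons_square_prefix_growth)
  then have "(3 / 2 :: real) ^ (k - 1) \<le> real (Max (g ` A)) + 1"
    using Max_ge_power_if_sparse[of "g ` A"] card nonempty assms(2) by simp
  moreover have "Max (g ` A) \<in> g ` A"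
    using nonempty assms(2) by simp
  then have "2 * Max (g ` A) + 1 \<le> length W"
    using g by (auto simp: cons_square_prefix_def)
  moreover have "(1 :: real) \<le> (3 / 2) ^ (k - 1)"
    by simp
  ultimately show ?thesis
    using five_quarters_powr_less_three_halves_power[of k] assms(1) by linarith
qed

end
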